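(* Let $\mu$ be a Borel probability measure on $\mathbb{R}$ satisfying Assumption A (see context), let $t>1$, and let $E$ be a zero of $m_\mu$. Then there exists a constant $M>0$ such that $\mathrm{dist}(\omega_t(z),E)\ge M$ for all $z\in\mathbb{R}$.
   Context: Assumption A: $n_{\mathrm{ac}},n_{\mathrm{pp}},n^{\mathrm{out}}_{\mathrm{pp}}\ge1$ integers; $\mu$ is a compactly supported Borel probability measure on $\mathbb{R}$ whose singular part is supported on a finite set $\{x_1,\dots,x_{n_{\mathrm{pp}}}\}$, whose absolutely continuous part $\mu_{\mathrm{ac}}$ is supported on $n_{\mathrm{ac}}$ intervals $[E_j^-,E_j^+]$, with exactly $n^{\mathrm{out}}_{\mathrm{pp}}$ atoms outside $\mathrm{supp}(\mu_{\mathrm{ac}})$, no atom at the endpoints $E_j^\pm$, and density $\rho$ with $C_j^{-1}<\rho(x)/\big((x-E_j^-)^{t_j^-}(E_j^+-x)^{t_j^+}\big)<C_j$ a.e. on $[E_j^-,E_j^+]$ for some $-1<t_j^\pm<1$, $C_j\ge1$. $m_\mu(z)=\int\frac{1}{x-z}\mu(dx)$ (a zero of $m_\mu$ is a real point $E$ where $m_\mu(E)=0$), $F_\mu=-1/m_\mu$. $\omega_t:\mathbb{C}^+\to\mathbb{C}^+$ is the analytic subordination function with $\mathrm{Im}\,\omega_t(z)\ge\mathrm{Im}\,z$, $\omega_t(i\eta)/(i\eta)\to1$, $t\omega_t(z)-z=(t-1)F_\mu(\omega_t(z))$, extended continuously to $\mathbb{C}^+\cup\mathbb{R}$ (values in $\mathbb{C}^+\cup\mathbb{R}\cup\{\infty\}$).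 *)

theory Defs
  imports "HOL-Probability.Probability"
begin

definition upper_half :: "complex set" where
  "upper_half = {z. 0 < Im z}"

definition stieltjes :: "real measure \<Rightarrow> complex \<Rightarrow> complex" where
  "stieltjes \<mu> z = (\<integral>x. 1 / (complex_of_real x - z) \<partial>\<mu>)"

definition F_transform :: "real measure \<Rightarrow> complex \<Rightarrow> complex" where
  "F_transform \<mu> z = - 1 / stieltjes \<mu> z"

text \<open>A (real) zero of m_mu: its boundary value at E (vertical limit from the
  upper half plane, which equals the integral when E is off the support) is 0.\<close>
definition stieltjes_zero :: "real measure \<Rightarrow> real \<Rightarrow> bool" where
  "stieltjes_zero \<mu> E \<longleftrightarrow>
     ((\<lambda>\<eta>::real. stieltjes \<mu> (complex_of_real E + \<i> * complex_of_real \<eta>)) \<longlongrightarrow> 0) (at_right 0)"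

definition assumptionA :: "real measure \<Rightarrow> nat \<Rightarrow> nat \<Rightarrow> nat \<Rightarrow> bool" where
  "assumptionA \<mu> nac npp nppout \<longleftrightarrow>
     1 \<le> nac \<and> 1 \<le> npp \<and> 1 \<le> nppout \<and>
     prob_space \<mu> \<and> sets \<mu> = sets borel \<and>
     (\<exists>K. compact K \<and> emeasure \<mu> (UNIV - K) = 0) \<and>
     (\<exists>(\<rho>::real \<Rightarrow> real) (X::real set) (p::real \<Rightarrow> real)
        (Em::nat \<Rightarrow> real) (Ep::nat \<Rightarrow> real) (tm::nat \<Rightarrow> real) (tp::nat \<Rightarrow> real) (C::nat \<Rightarrow> real).
        \<rho> \<in> borel_measurable borel \<and> (\<forall>x. 0 \<le> \<rho> x) \<and>
        finite X \<and> card X = npp \<and> (\<forall>x\<in>X. 0 < p x) \<and>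
        (\<forall>A\<in>sets borel. emeasure \<mu> A =
            (\<integral>\<^sup>+x. ennreal (\<rho> x) * indicator A x \<partial>lborel)
            + (\<Sum>x\<in>X. ennreal (p x) * indicator A x)) \<and>
        (\<forall>j<nac. Em j < Ep j) \<and>
        (\<forall>j. Suc j < nac \<longrightarrow> Ep j < Em (Suc j)) \<and>
        (\<forall>x. x \<notin> (\<Union>j<nac. {Em j..Ep j}) \<longrightarrow> \<rho> x = 0) \<and>
        card (X - (\<Union>j<nac. {Em j..Ep j})) = nppout \<and>
        (\<forall>j<nac. Em j \<notin> X \<and> Ep j \<notin> X) \<and>
        (\<forall>j<nac. -1 < tm j \<and> tm j < 1 \<and> -1 < tp j \<and> tp j < 1 \<and> 1 \<le> C j \<and>
           (AE x in lborel. x \<in> {Em j..Ep j} \<longrightarrow>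
              1 / C j < \<rho> x / ((x - Em j) powr tm j * (Ep j - x) powr tp j) \<and>
              \<rho> x / ((x - Em j) powr tm j * (Ep j - x) powr tp j) < C j)))"

text \<open>omega is the subordination function of mu^{boxplus t} on the upper half plane.\<close>
definition is_subordination :: "real measure \<Rightarrow> real \<Rightarrow> (complex \<Rightarrow> complex) \<Rightarrow> bool" where
  "is_subordination \<mu> t \<omega> \<longleftrightarrow>
     \<omega> holomorphic_on upper_half \<and>
     (\<forall>z\<in>upper_half. \<omega> z \<in> upper_half \<and> Im z \<le> Im (\<omega> z)) \<and>
     ((\<lambda>\<eta>::real. \<omega> (\<i> * complex_of_real \<eta>) / (\<i> * complex_of_real \<eta>)) \<longlongrightarrow> 1) at_top \<and>
     (\<forall>z\<in>upper_half. complex_of_real t * \<omega> z - z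
                        = complex_of_real (t - 1) * F_transform \<mu> (\<omega> z))"

end

theory Submission
  imports Defs
begin

text \<open>
  Write \<open>J(w) = \<integral> d\<mu>(x) / |x - w|\<^sup>2\<close>, so that \<open>Im m\<^sub>\<mu>(w) = Im w \<cdot> J(w)\<close>. Taking
  imaginary parts in the subordination equation at \<open>w = \<omega>\<^sub>t(z)\<close> gives
  \<open>(t - 1) J(w) < t |m\<^sub>\<mu>(w)|\<^sup>2\<close>. Near \<open>E\<close>, however, \<open>J\<close> is bounded below by a constant
  (\<open>\<mu>\<close> has compact support), while \<open>|m\<^sub>\<mu>(w)|\<^sup>2\<close> is small: comparing \<open>m\<^sub>\<mu>(w)\<close> with
  \<open>m\<^sub>\<mu>(E + i\<eta>)\<close> by Cauchy--Schwarz yields \<open>|m\<^sub>\<mu>(w)|\<^sup>2 \<le> 2\<epsilon>\<^sup>2 + 8\<eta>\<epsilon> J(w)\<close> whenever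
  \<open>|w - E| \<le> \<eta>\<close> and \<open>|m\<^sub>\<mu>(E + i\<eta>)| \<le> \<epsilon>\<close>. Since \<open>E\<close> is a zero of \<open>m\<^sub>\<mu>\<close>, \<open>\<epsilon>\<close> and \<open>\<eta>\<close>
  can be chosen to make these bounds incompatible, so \<open>\<omega>\<^sub>t\<close> keeps distance \<open>\<eta>\<close> from \<open>E\<close>
  on the upper half plane, and so do its boundary values.
\<close>

lemma Cauchy_Schwarz_integral:
  fixes f g :: "'a \<Rightarrow> real"
  assumes [measurable]: "f \<in> borel_measurable M" "g \<in> borel_measurable M"
    and nonneg: "\<And>x. 0 \<le> f x" "\<And>x. 0 \<le> g x"
    and int: "integrable M (\<lambda>x. f x * g x)" "integrable M (\<lambda>x. f x ^ 2)" "integrable M (\<lambda>x. g x ^ 2)"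
  shows "(\<integral>x. f x * g x \<partial>M)\<^sup>2 \<le> (\<integral>x. f x ^ 2 \<partial>M) * (\<integral>x. g x ^ 2 \<partial>M)"
proof -
  have "ennreal ((\<integral>x. f x * g x \<partial>M)\<^sup>2) = (\<integral>\<^sup>+x. ennreal (f x) * ennreal (g x) \<partial>M)\<^sup>2"
    using nn_integral_eq_integral[OF int(1)] nonneg
    by (simp add: ennreal_mult'' ennreal_power integral_nonneg_AE)
  also have "\<dots> \<le> (\<integral>\<^sup>+x. ennreal (f x) ^ 2 \<partial>M) * (\<integral>\<^sup>+x. ennreal (g x) ^ 2 \<partial>M)"
    by (intro Cauchy_Schwarz_nn_integral) measurable
  also have "\<dots> = ennreal ((\<integral>x. f x ^ 2 \<partial>M) * (\<integral>x. g x ^ 2 \<partial>M))"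
    using nn_integral_eq_integral[OF int(2)] nn_integral_eq_integral[OF int(3)] nonneg
    by (simp add: ennreal_power ennreal_mult integral_nonneg_AE)
  finally show ?thesis
    by (simp add: integral_nonneg_AE)
qed

lemma Im_le_cmod_real_minus: "Im w \<le> cmod (complex_of_real x - w)"
  using abs_Im_le_cmod[of "complex_of_real x - w"] by simp

lemma real_minus_nonzero: "0 < Im w \<Longrightarrow> complex_of_real x - w \<noteq> 0"
  using Im_le_cmod_real_minus[of w x] by auto

lemma inverse_cmod_real_minus_le: "0 < Im w \<Longrightarrow> 1 / cmod (complex_of_real x - w) \<le> 1 / Im w"
  using Im_le_cmod_real_minus[of w x] by (simp add: frac_le)

definition inv_dist_sq_integral :: "real measure \<Rightarrow> complex \<Rightarrow> real" where
  "inv_dist_sq_integral \<mu> w = (\<integral>x. 1 / (cmod (complex_of_real x - w))\<^sup>2 \<partial>\<mu>)"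

context
  fixes \<mu> :: "real measure"
  assumes finite_measure: "finite_measure \<mu>" and sets_borel: "sets \<mu> = sets borel"
begin

lemma borel_measurable_from_borel:
  "f \<in> borel_measurable borel \<Longrightarrow> f \<in> borel_measurable \<mu>"
  using measurable_cong_sets[OF sets_borel refl] by blast

lemma integrable_bounded_borel:
  fixes f :: "real \<Rightarrow> 'b::{banach,second_countable_topology}"
  assumes "f \<in> borel_measurable borel" and "\<And>x. norm (f x) \<le> B"
  shows "integrable \<mu> f"
proof -
  interpret finite_measure \<mu> by (rule finite_measure)
  show ?thesis
    using assms borel_measurable_from_borel by (intro integrable_const_bound[where B = B]) auto
qed

lemma integrable_stieltjes_kernel:
  assumes "0 < Im w"
  shows "integrable \<mu> (\<lambda>x. 1 / (complex_of_real x - w))"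
  by (rule integrable_bounded_borel[where B = "1 / Im w"])
    (use inverse_cmod_real_minus_le[OF assms] in \<open>auto simp: norm_divide\<close>)

lemma integrable_inv_dist_sq:
  assumes "0 < Im w"
  shows "integrable \<mu> (\<lambda>x. 1 / (cmod (complex_of_real x - w))\<^sup>2)"
  by (rule integrable_bounded_borel[where B = "(1 / Im w)\<^sup>2"])
    (use power_mono[OF inverse_cmod_real_minus_le[OF assms], of _ 2] in \<open>auto simp: power_one_over\<close>)

lemma Im_stieltjes:
  assumes "0 < Im w"
  shows "Im (stieltjes \<mu> w) = Im w * inv_dist_sq_integral \<mu> w"
proof -
  have kernel: "Im (1 / (complex_of_real x - w)) = Im w * (1 / (cmod (complex_of_real x - w))\<^sup>2)" for x
    by (simp add: Im_divide cmod_power2)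
  have "Im (stieltjes \<mu> w) = (\<integral>x. Im (1 / (complex_of_real x - w)) \<partial>\<mu>)"
    unfolding stieltjes_def using integrable_stieltjes_kernel[OF assms] by simp
  then show ?thesis
    by (simp only: kernel integral_mult_right_zero inv_dist_sq_integral_def)
qed

lemma stieltjes_diff_sq_le:
  assumes w: "0 < Im w" and v: "0 < Im v"
  shows "(cmod (stieltjes \<mu> w - stieltjes \<mu> v))\<^sup>2
           \<le> (cmod (w - v))\<^sup>2 * (inv_dist_sq_integral \<mu> w * inv_dist_sq_integral \<mu> v)"
proof -
  define a where "a x = 1 / cmod (complex_of_real x - w)" for x
  define b where "b x = 1 / cmod (complex_of_real x - v)" for x
  define P where "P x = 1 / (complex_of_real x - w) * (1 / (complex_of_real x - v))" for x
  have norm_P: "norm (P x) = a x * b x" for x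
    by (simp add: P_def a_def b_def norm_mult norm_divide)
  have "a x * b x \<le> 1 / Im w * (1 / Im v)" for x
    using inverse_cmod_real_minus_le[OF w, of x] inverse_cmod_real_minus_le[OF v, of x] w
    by (intro mult_mono) (auto simp: a_def b_def)
  then have bound: "norm (P x) \<le> 1 / Im w * (1 / Im v)" "norm (a x * b x) \<le> 1 / Im w * (1 / Im v)" for x
    by (simp_all add: norm_P a_def b_def)
  have int_ab: "integrable \<mu> (\<lambda>x. a x * b x)"
    by (rule integrable_bounded_borel[OF _ bound(2)]) (simp add: a_def b_def)
  have "stieltjes \<mu> w - stieltjes \<mu> v = (\<integral>x. (w - v) * P x \<partial>\<mu>)"
    unfolding stieltjes_def
    using integrable_stieltjes_kernel[OF w] integrable_stieltjes_kernel[OF v]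
      real_minus_nonzero[OF w] real_minus_nonzero[OF v]
    by (simp flip: Bochner_Integration.integral_diff add: P_def field_simps)
  then have "cmod (stieltjes \<mu> w - stieltjes \<mu> v) \<le> cmod (w - v) * (\<integral>x. a x * b x \<partial>\<mu>)"
    using integral_norm_bound[of \<mu> P] by (simp add: norm_mult norm_P mult_left_mono)
  then have "(cmod (stieltjes \<mu> w - stieltjes \<mu> v))\<^sup>2 \<le> (cmod (w - v))\<^sup>2 * (\<integral>x. a x * b x \<partial>\<mu>)\<^sup>2"
    by (simp flip: power_mult_distrib add: power_mono)
  also have "(\<integral>x. a x * b x \<partial>\<mu>)\<^sup>2 \<le> (\<integral>x. a x ^ 2 \<partial>\<mu>) * (\<integral>x. b x ^ 2 \<partial>\<mu>)"
    using int_ab integrable_inv_dist_sq[OF w] integrable_inv_dist_sq[OF v]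
    by (intro Cauchy_Schwarz_integral borel_measurable_from_borel)
      (auto simp: a_def b_def power_one_over)
  finally show ?thesis
    by (simp add: inv_dist_sq_integral_def a_def b_def power_one_over mult_left_mono)
qed

lemma stieltjes_sq_le_near_point:
  assumes w: "0 < Im w" and \<eta>: "0 < \<eta>"
    and small: "cmod (stieltjes \<mu> (complex_of_real E + \<i> * complex_of_real \<eta>)) \<le> \<epsilon>"
    and near: "cmod (w - complex_of_real E) \<le> \<eta>"
  shows "(cmod (stieltjes \<mu> w))\<^sup>2 \<le> 2 * \<epsilon>\<^sup>2 + 8 * \<eta> * \<epsilon> * inv_dist_sq_integral \<mu> w"
proof -
  define v where "v = complex_of_real E + \<i> * complex_of_real \<eta>"
  have v: "0 < Im v" using \<eta> by (simp add: v_def)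
  have J_nonneg: "0 \<le> inv_dist_sq_integral \<mu> w"
    unfolding inv_dist_sq_integral_def by (simp add: integral_nonneg_AE)
  have "\<eta> * inv_dist_sq_integral \<mu> v = Im (stieltjes \<mu> v)"
    using Im_stieltjes[OF v] by (simp add: v_def)
  also have "\<dots> \<le> \<epsilon>"
    using abs_Im_le_cmod[of "stieltjes \<mu> v"] small by (simp add: v_def)
  finally have Jv: "\<eta> * inv_dist_sq_integral \<mu> v \<le> \<epsilon>" .
  have "cmod (w - v) \<le> cmod (w - complex_of_real E) + cmod (\<i> * complex_of_real \<eta>)"
    unfolding v_def by (metis diff_diff_eq norm_triangle_ineq4)
  then have dist_wv: "cmod (w - v) \<le> 2 * \<eta>"
    using near \<eta> by (simp add: norm_mult)
  have "(cmod (stieltjes \<mu> w - stieltjes \<mu> v))\<^sup>2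
          \<le> (cmod (w - v))\<^sup>2 * (inv_dist_sq_integral \<mu> w * inv_dist_sq_integral \<mu> v)"
    by (rule stieltjes_diff_sq_le[OF w v])
  also have "\<dots> \<le> (2 * \<eta>)\<^sup>2 * (inv_dist_sq_integral \<mu> w * inv_dist_sq_integral \<mu> v)"
    using dist_wv J_nonneg by (intro mult_right_mono power_mono)
      (auto simp: inv_dist_sq_integral_def integral_nonneg_AE)
  also have "\<dots> = 4 * \<eta> * inv_dist_sq_integral \<mu> w * (\<eta> * inv_dist_sq_integral \<mu> v)"
    by (simp add: power2_eq_square)
  also have "\<dots> \<le> 4 * \<eta> * inv_dist_sq_integral \<mu> w * \<epsilon>"
    using Jv \<eta> J_nonneg by (intro mult_left_mono) auto
  finally have diff: "(cmod (stieltjes \<mu> w - stieltjes \<mu> v))\<^sup>2 \<le> 4 * \<eta> * \<epsilon> * inv_dist_sq_integral \<mu> w"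
    by (simp add: ac_simps)
  have tri: "cmod (stieltjes \<mu> w) \<le> cmod (stieltjes \<mu> v) + cmod (stieltjes \<mu> w - stieltjes \<mu> v)"
    by (metis add.commute diff_add_cancel norm_triangle_ineq)
  have "(cmod (stieltjes \<mu> w))\<^sup>2 \<le> 2 * (cmod (stieltjes \<mu> v))\<^sup>2 + 2 * (cmod (stieltjes \<mu> w - stieltjes \<mu> v))\<^sup>2"
    using power_mono[OF tri, of 2] sum_squares_bound[of "cmod (stieltjes \<mu> v)" "cmod (stieltjes \<mu> w - stieltjes \<mu> v)"]
    by (simp add: power2_sum)
  moreover have "(cmod (stieltjes \<mu> v))\<^sup>2 \<le> \<epsilon>\<^sup>2"
    using small by (simp add: v_def power_mono)
  ultimately show ?thesis
    using diff by linarith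
qed

lemma subordination_inv_dist_sq_less:
  assumes t: "1 < t" and z: "0 < Im z" and w: "0 < Im w"
    and subord: "complex_of_real t * w - z = complex_of_real (t - 1) * F_transform \<mu> w"
    and J_pos: "0 < inv_dist_sq_integral \<mu> w"
  shows "(t - 1) * inv_dist_sq_integral \<mu> w < t * (cmod (stieltjes \<mu> w))\<^sup>2"
proof -
  define m where "m = stieltjes \<mu> w"
  define J where "J = inv_dist_sq_integral \<mu> w"
  have Im_m: "Im m = Im w * J"
    using Im_stieltjes[OF w] by (simp add: m_def J_def)
  then have "m \<noteq> 0" using w J_pos by (auto simp: J_def)
  then have N: "0 < (cmod m)\<^sup>2" by simp
  have "Im (F_transform \<mu> w) = Im m / (cmod m)\<^sup>2"
    by (simp add: F_transform_def m_def[symmetric] Im_divide cmod_power2)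
  then have "t * Im w - Im z = (t - 1) * (Im w * J / (cmod m)\<^sup>2)"
    using arg_cong[OF subord, of Im] Im_m by simp
  then have "Im w * ((t - 1) * J) < Im w * (t * (cmod m)\<^sup>2)"
    using z N by (simp add: field_simps)
  then show ?thesis
    using w by (simp add: m_def J_def)
qed

lemma subordination_far_from_point:
  assumes t: "1 < t" and z: "0 < Im z" and w: "0 < Im w"
    and subord: "complex_of_real t * w - z = complex_of_real (t - 1) * F_transform \<mu> w"
    and c: "0 < c" "c \<le> inv_dist_sq_integral \<mu> w"
    and \<eta>: "0 < \<eta>" and small: "cmod (stieltjes \<mu> (complex_of_real E + \<i> * complex_of_real \<eta>)) \<le> \<epsilon>"
    and \<epsilon>_small: "4 * t * \<epsilon>\<^sup>2 \<le> (t - 1) * c" and \<eta>_small: "16 * t * \<epsilon> * \<eta> \<le> t - 1"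
  shows "\<eta> < cmod (w - complex_of_real E)"
proof (rule ccontr)
  define J where "J = inv_dist_sq_integral \<mu> w"
  assume "\<not> \<eta> < cmod (w - complex_of_real E)"
  then have near: "cmod (w - complex_of_real E) \<le> \<eta>"
    by simp
  have "(t - 1) * J < t * (cmod (stieltjes \<mu> w))\<^sup>2"
    using subordination_inv_dist_sq_less[OF t z w subord] c by (simp add: J_def)
  also have "\<dots> \<le> t * (2 * \<epsilon>\<^sup>2 + 8 * \<eta> * \<epsilon> * J)"
    using stieltjes_sq_le_near_point[OF w \<eta> small near] t by (simp add: J_def)
  also have "\<dots> = (4 * t * \<epsilon>\<^sup>2 + (16 * t * \<epsilon> * \<eta>) * J) / 2"
    by (simp add: algebra_simps)
  also have "\<dots> \<le> (t - 1) * J"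
  proof -
    have "(t - 1) * c \<le> (t - 1) * J"
      using c t by (simp add: J_def)
    moreover have "(16 * t * \<epsilon> * \<eta>) * J \<le> (t - 1) * J"
      using \<eta>_small c by (intro mult_right_mono) (auto simp: J_def)
    ultimately show ?thesis
      using \<epsilon>_small by (simp add: field_simps)
  qed
  finally show False
    by simp
qed

end

lemma inv_dist_sq_integral_lower_bound:
  assumes "prob_space \<mu>" and "sets \<mu> = sets borel"
    and support: "AE x in \<mu>. \<bar>x\<bar> \<le> R" and w: "0 < Im w" "cmod (w - complex_of_real a) \<le> r"
  shows "1 / (R + \<bar>a\<bar> + r)\<^sup>2 \<le> inv_dist_sq_integral \<mu> w"
proof -
  interpret prob_space \<mu> by fact
  have "AE x in \<mu>. 1 / (R + \<bar>a\<bar> + r)\<^sup>2 \<le> 1 / (cmod (complex_of_real x - w))\<^sup>2"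
    using support
  proof (rule AE_mp, intro AE_I2 impI)
    fix x assume x: "\<bar>x\<bar> \<le> R"
    have "cmod (complex_of_real x - w)
        = cmod ((complex_of_real x - complex_of_real a) - (w - complex_of_real a))"
      by simp
    also have "\<dots> \<le> \<bar>x\<bar> + \<bar>a\<bar> + cmod (w - complex_of_real a)"
      using norm_triangle_ineq4[of "complex_of_real x" "complex_of_real a"]
        norm_triangle_ineq4[of "complex_of_real x - complex_of_real a" "w - complex_of_real a"]
      by simp
    also have "\<dots> \<le> R + \<bar>a\<bar> + r"
      using x w(2) by simp
    finally have "cmod (complex_of_real x - w) \<le> R + \<bar>a\<bar> + r" .
    moreover have "0 < cmod (complex_of_real x - w)"
      using real_minus_nonzero[OF w(1)] by simp
    ultimately show "1 / (R + \<bar>a\<bar> + r)\<^sup>2 \<le> 1 / (cmod (complex_of_real x - w))\<^sup>2"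
      by (intro divide_left_mono power_mono mult_pos_pos) auto
  qed
  then have "(\<integral>x. 1 / (R + \<bar>a\<bar> + r)\<^sup>2 \<partial>\<mu>) \<le> inv_dist_sq_integral \<mu> w"
    unfolding inv_dist_sq_integral_def
    using integrable_inv_dist_sq[OF finite_measure_axioms assms(2) w(1)]
    by (intro integral_mono_AE) auto
  then show ?thesis
    by (simp add: prob_space)
qed

lemma AE_abs_le_of_compact_support:
  fixes \<mu> :: "real measure"
  assumes "sets \<mu> = sets borel" and "compact K" and "emeasure \<mu> (UNIV - K) = 0"
  obtains R where "AE x in \<mu>. \<bar>x\<bar> \<le> R"
proof -
  obtain R where R: "\<And>x. x \<in> K \<Longrightarrow> \<bar>x\<bar> \<le> R"
    using compact_imp_bounded[OF assms(2)] unfolding bounded_iff by auto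
  have "AE x in \<mu>. x \<in> K"
    using assms by (intro AE_I[where N = "UNIV - K"]) (auto intro: borel_closed compact_imp_closed)
  then show thesis
    by (rule that[OF AE_mp]) (auto intro: R)
qed

lemma at_real_within_upper_half_nontrivial: "at (complex_of_real x) within upper_half \<noteq> bot"
proof -
  have "closure (upper_half - {complex_of_real x}) = {z. 0 \<le> Im z}"
    using closure_halfspace_gt[of \<i> 0] by (simp add: upper_half_def)
  then show ?thesis
    using not_trivial_limit_within by fastforce
qed

lemma lower_bound_tendsto_at_real_within_upper_half:
  assumes "(f \<longlongrightarrow> L) (at (complex_of_real x) within upper_half)"
    and "\<And>z. z \<in> upper_half \<Longrightarrow> \<eta> \<le> cmod (f z - c)"
  shows "\<eta> \<le> cmod (L - c)"
proof (rule tendsto_lowerbound)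
  show "((\<lambda>z. cmod (f z - c)) \<longlongrightarrow> cmod (L - c)) (at (complex_of_real x) within upper_half)"
    by (intro tendsto_intros assms(1))
  show "\<forall>\<^sub>F z in at (complex_of_real x) within upper_half. \<eta> \<le> cmod (f z - c)"
    by (simp add: eventually_at_filter assms(2))
qed (rule at_real_within_upper_half_nontrivial)

lemma subordination_bounded_away_from_stieltjes_zero:
  assumes ps: "prob_space \<mu>" and sb: "sets \<mu> = sets borel"
    and support: "AE x in \<mu>. \<bar>x\<bar> \<le> R"
    and t: "1 < t" and zero: "stieltjes_zero \<mu> E" and subord: "is_subordination \<mu> t \<omega>"
  obtains \<eta> where "0 < \<eta>" and "\<And>z. z \<in> upper_half \<Longrightarrow> \<eta> \<le> cmod (\<omega> z - complex_of_real E)"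
proof -
  have fm: "finite_measure \<mu>"
    using ps by (rule prob_space.finite_measure)
  define c where "c = 1 / (\<bar>R\<bar> + \<bar>E\<bar> + 1)\<^sup>2"
  have c: "0 < c"
    by (simp add: c_def add_nonneg_pos)
  have J_lower: "c \<le> inv_dist_sq_integral \<mu> w"
    if "0 < Im w" and "cmod (w - complex_of_real E) \<le> 1" for w
  proof -
    have "AE x in \<mu>. \<bar>x\<bar> \<le> \<bar>R\<bar>"
      using support by eventually_elim auto
    then show ?thesis
      unfolding c_def by (rule inv_dist_sq_integral_lower_bound[OF ps sb _ that])
  qed
  define \<epsilon> where "\<epsilon> = sqrt ((t - 1) * c / (4 * t))"
  have \<epsilon>: "0 < \<epsilon>" and \<epsilon>_small: "4 * t * \<epsilon>\<^sup>2 \<le> (t - 1) * c"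
    using t c by (simp_all add: \<epsilon>_def)
  obtain b where b: "0 < b"
    and m_small: "\<And>\<eta>. 0 < \<eta> \<Longrightarrow> \<eta> < b \<Longrightarrow> cmod (stieltjes \<mu> (complex_of_real E + \<i> * complex_of_real \<eta>)) < \<epsilon>"
    using zero \<epsilon> unfolding stieltjes_zero_def tendsto_iff eventually_at_right_field by force
  define \<eta> where "\<eta> = min (b / 2) (min 1 ((t - 1) / (16 * t * \<epsilon>)))"
  have \<eta>: "0 < \<eta>" "\<eta> \<le> 1"
    using b t \<epsilon> by (auto simp: \<eta>_def)
  have "\<eta> \<le> (t - 1) / (16 * t * \<epsilon>)"
    by (simp add: \<eta>_def)
  then have \<eta>_small: "16 * t * \<epsilon> * \<eta> \<le> t - 1"
    using t \<epsilon> by (simp add: le_divide_eq mult.commute)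
  have m_at_\<eta>: "cmod (stieltjes \<mu> (complex_of_real E + \<i> * complex_of_real \<eta>)) \<le> \<epsilon>"
    using m_small[OF \<eta>(1)] b by (fastforce simp: \<eta>_def)
  have "\<eta> \<le> cmod (\<omega> z - complex_of_real E)" if z: "z \<in> upper_half" for z
  proof (rule ccontr)
    assume "\<not> \<eta> \<le> cmod (\<omega> z - complex_of_real E)"
    moreover have "0 < Im (\<omega> z)"
      and "complex_of_real t * \<omega> z - z = complex_of_real (t - 1) * F_transform \<mu> (\<omega> z)"
      using subord z unfolding is_subordination_def upper_half_def by auto
    ultimately show False
      using subordination_far_from_point[OF fm sb t _ _ _ c _ \<eta>(1) m_at_\<eta> \<epsilon>_small \<eta>_small]
        J_lower \<eta>(2) z by (force simp: upper_half_def)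
  qed
  with \<eta>(1) show thesis
    by (rule that)
qed

theorem lemma3p1:
  fixes \<mu> :: "real measure" and nac npp nppout :: nat
    and t E :: real and \<omega> :: "complex \<Rightarrow> complex"
  assumes "assumptionA \<mu> nac npp nppout"
    and "1 < t"
    and "stieltjes_zero \<mu> E"
    and "is_subordination \<mu> t \<omega>"
  shows "\<exists>M>0. \<forall>x::real. \<forall>L::complex.
           (\<omega> \<longlongrightarrow> L) (at (complex_of_real x) within upper_half)
             \<longrightarrow> M \<le> cmod (L - complex_of_real E)"
proof -
  have ps: "prob_space \<mu>" and sb: "sets \<mu> = sets borel"
    and "\<exists>K. compact K \<and> emeasure \<mu> (UNIV - K) = 0"
    using assms(1) unfolding assumptionA_def by auto
  then obtain R where "AE x in \<mu>. \<bar>x\<bar> \<le> R"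
    using AE_abs_le_of_compact_support by metis
  then obtain \<eta> where "0 < \<eta>" and "\<And>z. z \<in> upper_half \<Longrightarrow> \<eta> \<le> cmod (\<omega> z - complex_of_real E)"
    using subordination_bounded_away_from_stieltjes_zero[OF ps sb _ assms(2-4)] by metis
  then show ?thesis
    using lower_bound_tendsto_at_real_within_upper_half by blast
qed

end
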